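(* Let $\mathcal{D}$ be a finite dataset, $\mathbb{P}_{\mathcal{D}}$ a full-support probability distribution on $\mathcal{D}$, $\alpha\in(0,1)$ with $\mathcal{S}_\alpha\neq\varnothing$, and $\mathrm{Learn}$ any (possibly randomized) learning algorithm. Let $\mathrm{Retrain}$ be the retraining unlearning method, i.e. $\mathrm{Retrain}(\mathrm{Learn}(\mathcal{R}\cup\mathcal{F}),\mathcal{F})=\mathrm{Learn}(\mathcal{R})$. Then for every (not necessarily efficient) adversary $\mathcal{A}$, $$\mathrm{Adv}(\mathcal{A},\mathrm{Retrain})=0 .$$ Consequently $\mathcal{Q}(\mathrm{Retrain})=1$.
   Context: Unlearning sample inference game. $\mathcal{D}$ is a finite dataset with a "sensitivity distribution" $\mathbb{P}_{\mathcal{D}}$ on $\mathcal{D}$ (assumed to have full support), and $\alpha\in(0,1)$ is the unlearning portion. $\mathcal{S}_\alpha$ is the (finite) set of all ordered triples $s=(\mathcal{R},\mathcal{F},\mathcal{T})$ of pairwise disjoint subsets of $\mathcal{D}$ with $\mathcal{R}\cup\mathcal{F}\cup\mathcal{T}=\mathcal{D}$, $|\mathcal{F}|/|\mathcal{R}\cup\mathcal{F}|=\alpha$ and $|\mathcal{F}|=|\mathcal{T}|$ (retain, forget, test sets). For $s\in\mathcal{S}_\alpha$ and a bit $b\in\{0,1\}$, the random oracle $\mathcal{O}_s(b)$, each time it is queried, returns an independent sample from $\mathbb{P}_{\mathcal{D}}$ conditioned on $\mathcal{F}$ if $b=0$, and conditioned on $\mathcal{T}$ if $b=1$. A learning algorithm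 $\mathrm{Learn}$ is a randomized map from datasets to models; an unlearning algorithm $\mathrm{Unlearn}$ is a randomized map taking a model and a subset of data and returning a model. For $s=(\mathcal{R},\mathcal{F},\mathcal{T})$, $\mathbb{P}_{\mathcal{M}}(\mathrm{Unlearn},s)$ denotes the distribution of $m=\mathrm{Unlearn}(\mathrm{Learn}(\mathcal{R}\cup\mathcal{F}),\mathcal{F})$. An adversary $\mathcal{A}$ is a (possibly randomized) algorithm that is given access to a model $m$ and to an oracle $\mathcal{O}$ (which it may query repeatedly; $b$ and $s$ are unknown to it) and outputs a bit $\mathcal{A}^{\mathcal{O}}(m)\in\{0,1\}$; the oracle is independent of $m$ given $s$. The advantage is $$\mathrm{Adv}(\mathcal{A},\mathrm{Unlearn})=\frac{1}{|\mathcal{S}_\alpha|}\Big|\sum_{s\in\mathcal{S}_\alpha}\Pr_{m\sim\mathbb{P}_{\mathcal{M}}(\mathrm{Unlearn},s),\,\mathcal{O}=\mathcal{O}_s(0)}(\mathcal{A}^{\mathcal{O}}(m)=1)-\sum_{s\in\mathcal{S}_\alpha}\Pr_{m\sim\mathbb{P}_{\mathcal{M}}(\mathrm{Unlearn},s),\,\mathcal{O}=\mathcal{O}_s(1)}(\mathcal{A}^{\mathcal{O}}(m)=1)\Big|,$$ and the Unlearning Quality is $\mathcal{Q}(\mathrm{Unlearn})=1-\sup_{\mathcal{A}}\mathrm{Adv}(\mathcal{A},\mathrm{Unlearn})$, the supremum over adversaries. *)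

theory Defs
  imports "HOL-Probability.Probability"
begin

definition S_alpha :: "'a set \<Rightarrow> real \<Rightarrow> ('a set \<times> 'a set \<times> 'a set) set" where
  "S_alpha D \<alpha> = {(R, F, T). R \<subseteq> D \<and> F \<subseteq> D \<and> T \<subseteq> D \<and>
      R \<inter> F = {} \<and> R \<inter> T = {} \<and> F \<inter> T = {} \<and> R \<union> F \<union> T = D \<and>
      real (card F) / real (card (R \<union> F)) = \<alpha> \<and> card F = card T}"

(* Oracle O_s(b): the whole (infinite) sequence of its independent answers,
  each distributed as P conditioned on F (b = False, i.e. bit 0) or on T (b = True, bit 1). *)
definition orcl :: "'a pmf \<Rightarrow> ('a set \<times> 'a set \<times> 'a set) \<Rightarrow> bool \<Rightarrow> 'a stream measure" where
  "orcl P s b = (case s of (R, F, T) \<Rightarrow>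
      stream_space (measure_pmf (cond_pmf P (if b then T else F))))"

definition model_dist :: "('a set \<Rightarrow> 'm pmf) \<Rightarrow> ('m \<Rightarrow> 'a set \<Rightarrow> 'm pmf)
    \<Rightarrow> ('a set \<times> 'a set \<times> 'a set) \<Rightarrow> 'm pmf" where
  "model_dist Learn Unlearn s = (case s of (R, F, T) \<Rightarrow>
      bind_pmf (Learn (R \<union> F)) (\<lambda>m. Unlearn m F))"

(* An adversary gets the model and the sequence of orcl answers (it may read any
  prefix, adaptively) and outputs a random bit; it uses its own independent coins. *)
definition is_adversary :: "('m \<Rightarrow> 'a stream \<Rightarrow> bool pmf) \<Rightarrow> bool" where
  "is_adversary A \<longleftrightarrow>
     (\<forall>m. (\<lambda>\<omega>. pmf (A m \<omega>) True) \<in> borel_measurable (stream_space (count_space UNIV)))"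

definition prob_one :: "'a pmf \<Rightarrow> (('a set \<times> 'a set \<times> 'a set) \<Rightarrow> 'm pmf)
    \<Rightarrow> ('m \<Rightarrow> 'a stream \<Rightarrow> bool pmf) \<Rightarrow> ('a set \<times> 'a set \<times> 'a set) \<Rightarrow> bool \<Rightarrow> real" where
  "prob_one P PM A s b =
     measure_pmf.expectation (PM s) (\<lambda>m. integral\<^sup>L (orcl P s b) (\<lambda>\<omega>. pmf (A m \<omega>) True))"

definition adv :: "'a set \<Rightarrow> real \<Rightarrow> 'a pmf \<Rightarrow> (('a set \<times> 'a set \<times> 'a set) \<Rightarrow> 'm pmf)
    \<Rightarrow> ('m \<Rightarrow> 'a stream \<Rightarrow> bool pmf) \<Rightarrow> real" where
  "adv D \<alpha> P PM A = 1 / real (card (S_alpha D \<alpha>)) *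
     \<bar>(\<Sum>s\<in>S_alpha D \<alpha>. prob_one P PM A s False) - (\<Sum>s\<in>S_alpha D \<alpha>. prob_one P PM A s True)\<bar>"

definition quality :: "'a set \<Rightarrow> real \<Rightarrow> 'a pmf \<Rightarrow> (('a set \<times> 'a set \<times> 'a set) \<Rightarrow> 'm pmf) \<Rightarrow> real" where
  "quality D \<alpha> P PM = 1 - (SUP A \<in> {A :: 'm \<Rightarrow> 'a stream \<Rightarrow> bool pmf. is_adversary A}. adv D \<alpha> P PM A)"

end

theory Submission
  imports Defs
begin

text \<open>Under retraining the released model depends only on the retain set, so exchanging the
  forget and test sets of a split leaves the model unchanged while exchanging the two oracles.
  Since this exchange is a bijection of the set of splits, the two sums in the advantage agree.\<close>

definition swap_forget_test :: "'a set \<times> 'a set \<times> 'a set \<Rightarrow> 'a set \<times> 'a set \<times> 'a set" where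
  "swap_forget_test s = (case s of (R, F, T) \<Rightarrow> (R, T, F))"

lemma swap_forget_test_mem_S_alpha:
  assumes "finite D" and "(R, F, T) \<in> S_alpha D \<alpha>"
  shows "(R, T, F) \<in> S_alpha D \<alpha>"
proof -
  have fin: "finite R" "finite F" "finite T"
    using assms by (auto simp: S_alpha_def intro: finite_subset)
  have "card (R \<union> T) = card (R \<union> F)"
    using assms fin by (auto simp: S_alpha_def card_Un_disjoint)
  then show ?thesis
    using assms(2) by (auto simp: S_alpha_def)
qed

lemma bij_betw_swap_forget_test:
  assumes "finite D"
  shows "bij_betw swap_forget_test (S_alpha D \<alpha>) (S_alpha D \<alpha>)"
  by (rule bij_betw_byWitness[where f' = swap_forget_test])
     (auto simp: swap_forget_test_def intro: swap_forget_test_mem_S_alpha[OF assms])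

lemma prob_one_swap_forget_test:
  assumes "PM (swap_forget_test s) = PM s"
  shows "prob_one P PM A (swap_forget_test s) False = prob_one P PM A s True"
  using assms by (cases s) (simp add: swap_forget_test_def prob_one_def orcl_def)

lemma adv_eq_0_if_swap_invariant:
  assumes "finite D"
    and invariant: "\<And>s. s \<in> S_alpha D \<alpha> \<Longrightarrow> PM (swap_forget_test s) = PM s"
  shows "adv D \<alpha> P PM A = 0"
proof -
  let ?S = "S_alpha D \<alpha>" and ?p = "prob_one P PM A"
  have "(\<Sum>s\<in>?S. ?p s False) = (\<Sum>s\<in>?S. ?p (swap_forget_test s) False)"
    using sum.reindex_bij_betw[OF bij_betw_swap_forget_test[OF assms(1)], of "\<lambda>s. ?p s False"]
    by simp
  also have "\<dots> = (\<Sum>s\<in>?S. ?p s True)"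
    by (rule sum.cong[OF refl]) (simp add: prob_one_swap_forget_test invariant)
  finally show ?thesis
    by (simp add: adv_def)
qed

lemma quality_eq_1_if_adv_eq_0:
  assumes "\<And>A. is_adversary A \<Longrightarrow> adv D \<alpha> P PM A = 0"
  shows "quality D \<alpha> P PM = 1"
proof -
  have "is_adversary (\<lambda>m \<omega>. return_pmf True)"
    by (simp add: is_adversary_def)
  then have "adv D \<alpha> P PM ` {A. is_adversary A} = {0}"
    using assms by (auto intro!: image_eqI[where x = "\<lambda>m \<omega>. return_pmf True"])
  then show ?thesis
    by (simp add: quality_def)
qed

lemma model_dist_retrain:
  assumes "bind_pmf (Learn (R \<union> F)) (\<lambda>m. Unlearn m F) = Learn R"
  shows "model_dist Learn Unlearn (R, F, T) = Learn R"
  using assms by (simp add: model_dist_def)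

theorem theorem3p4:
  fixes D :: "'a set" and P :: "'a pmf" and \<alpha> :: real
    and Learn :: "'a set \<Rightarrow> 'm pmf" and Unlearn :: "'m \<Rightarrow> 'a set \<Rightarrow> 'm pmf"
  assumes "finite D"
    and "set_pmf P = D"
    and "0 < \<alpha>" and "\<alpha> < 1"
    and "S_alpha D \<alpha> \<noteq> {}"
    and retrain: "\<And>R F T. (R, F, T) \<in> S_alpha D \<alpha> \<Longrightarrow>
                    bind_pmf (Learn (R \<union> F)) (\<lambda>m. Unlearn m F) = Learn R"
  shows "(\<forall>A. is_adversary A \<longrightarrow> adv D \<alpha> P (model_dist Learn Unlearn) A = 0)
         \<and> quality D \<alpha> P (model_dist Learn Unlearn) = 1"
proof -
  have "model_dist Learn Unlearn (swap_forget_test s) = model_dist Learn Unlearn s"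
    if "s \<in> S_alpha D \<alpha>" for s
  proof (cases s)
    case (fields R F T)
    then have "(R, T, F) \<in> S_alpha D \<alpha>"
      using swap_forget_test_mem_S_alpha[OF \<open>finite D\<close>] that by blast
    then show ?thesis
      using that fields by (simp add: swap_forget_test_def model_dist_retrain retrain)
  qed
  then have "adv D \<alpha> P (model_dist Learn Unlearn) A = 0" for A
    using adv_eq_0_if_swap_invariant[OF \<open>finite D\<close>] by blast
  then show ?thesis
    using quality_eq_1_if_adv_eq_0 by blast
qed

end
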